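(* Let $n\ge 2$. The principal minor lattice $L'_n$ is minimally generated by \[\mathcal B'=\{2[in|jn] : i\neq j\in[n-1]\}\cup\{[in|in] : i\in[n-1]\}.\] Furthermore the group $L_n/L'_n$ is isomorphic to $(\mathbb{Z}/2\mathbb{Z})^{c_{n-1}}$, where $c_{n-1}=\binom{n-1}{2}$.
   Context: $[n]=\{1,\dots,n\}$. $\mathbb{Z}^{\binom{n+1}{2}}$ has standard basis $e_{ij}$, $1\le i\le j\le n$, with $e_{ij}=e_{ji}$. For $i,j,k,l\in[n]$, $[ij|kl]:=e_{ik}+e_{jl}-e_{il}-e_{jk}$ (so $[in|jn]=[jn|in]$). $V_n$ is the $n\times\binom{n+1}{2}$ integer matrix whose column indexed by $jk$ is $e_j+e_k\in\mathbb{Z}^n$, and $L_n=\ker_{\mathbb{Z}}(V_n)$. The principal minor lattice $L'_n$ is the sublattice of $\mathbb{Z}^{\binom{n+1}{2}}$ generated by the vectors $[ij|ij]$, $i,j\in[n]$ (exponent vectors of the principal $2$-minors $x_{ii}x_{jj}-x_{ij}^2$). *)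

theory Defs
  imports "HOL-Algebra.Algebra" "HOL-Library.Function_Algebras"
begin

text \<open>Vectors of \<open>Z^(binom(n+1,2))\<close> are functions \<open>nat \<times> nat \<Rightarrow> int\<close>, where the coordinate
  indexed by \<open>ij\<close> (\<open>1 \<le> i \<le> j \<le> n\<close>) is the value at the pair \<open>(i,j)\<close>; all other values are 0.\<close>

definition Idx :: "nat \<Rightarrow> (nat \<times> nat) set" where
  "Idx n = {(i, j). 1 \<le> i \<and> i \<le> j \<and> j \<le> n}"

definition e :: "nat \<Rightarrow> nat \<Rightarrow> (nat \<times> nat \<Rightarrow> int)" where
  "e i j = (\<lambda>p. if p = (min i j, max i j) then 1 else 0)"

definition bracket :: "nat \<Rightarrow> nat \<Rightarrow> nat \<Rightarrow> nat \<Rightarrow> (nat \<times> nat \<Rightarrow> int)" where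
  "bracket i j k l = e i k + e j l - e i l - e j k"

definition Zspan :: "(nat \<times> nat \<Rightarrow> int) set \<Rightarrow> (nat \<times> nat \<Rightarrow> int) set" where
  "Zspan S = {x. \<exists>F c. finite F \<and> F \<subseteq> S \<and> x = (\<Sum>v\<in>F. (\<lambda>p. c v * v p))}"

text \<open>\<open>L_n = ker_Z(V_n)\<close>: column \<open>jk\<close> of \<open>V_n\<close> is \<open>e_j + e_k \<in> Z^n\<close>.\<close>
definition Vn :: "nat \<Rightarrow> (nat \<times> nat \<Rightarrow> int) \<Rightarrow> nat \<Rightarrow> int" where
  "Vn n x m = (\<Sum>(j, k)\<in>Idx n. x (j, k) * ((if j = m then 1 else 0) + (if k = m then 1 else 0)))"

definition L :: "nat \<Rightarrow> (nat \<times> nat \<Rightarrow> int) set" where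
  "L n = {x. (\<forall>p. p \<notin> Idx n \<longrightarrow> x p = 0) \<and> (\<forall>m\<in>{1..n}. Vn n x m = 0)}"

definition Lprime :: "nat \<Rightarrow> (nat \<times> nat \<Rightarrow> int) set" where
  "Lprime n = Zspan {bracket i j i j | i j. i \<in> {1..n} \<and> j \<in> {1..n}}"

definition Bprime :: "nat \<Rightarrow> (nat \<times> nat \<Rightarrow> int) set" where
  "Bprime n = {(\<lambda>p. 2 * bracket i n j n p) | i j. i \<in> {1..n-1} \<and> j \<in> {1..n-1} \<and> i \<noteq> j}
            \<union> {bracket i n i n | i. i \<in> {1..n-1}}"

definition Lgroup :: "nat \<Rightarrow> (nat \<times> nat \<Rightarrow> int) monoid" where
  "Lgroup n = \<lparr>carrier = L n, monoid.mult = (+), one = 0\<rparr>"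

end

theory Submission
  imports Defs
begin

text \<open>The identity \<open>2[in|jn] = [in|in] + [jn|jn] - [ij|ij]\<close> shows that \<open>B'\<close> generates \<open>L'_n\<close>.
  On the lower block of coordinates \<open>ij\<close> with \<open>i \<le> j < n\<close>, the element of \<open>B'\<close> indexed by \<open>ij\<close>
  is supported at \<open>ij\<close> alone, with value 1 if \<open>i = j\<close> and 2 otherwise; this gives minimality.
  An element of \<open>L_n\<close> is determined by its lower block, because the kernel equations of \<open>V_n\<close>
  force the coordinates \<open>in\<close>. Hence \<open>L'_n\<close> consists of the \<open>x \<in> L_n\<close> whose \<open>binom(n-1,2)\<close>
  off-diagonal lower coordinates are even, and reducing these coordinates mod 2 identifies
  \<open>L_n/L'_n\<close> with \<open>(Z/2Z)^binom(n-1,2)\<close>.\<close>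

lemma sum_fun_apply: "(\<Sum>a\<in>A. f a) x = (\<Sum>a\<in>A. f a x)"
  by (induction A rule: infinite_finite_induct) auto

lemma Zspan_iff:
  "x \<in> Zspan S \<longleftrightarrow> (\<exists>F c. finite F \<and> F \<subseteq> S \<and> (\<forall>p. x p = (\<Sum>v\<in>F. c v * v p)))"
  unfolding Zspan_def by (auto simp: sum_fun_apply fun_eq_iff)

lemma Zspan_zero: "0 \<in> Zspan S"
  unfolding Zspan_iff by (rule exI[of _ "{}"]) simp

lemma Zspan_superset: "v \<in> S \<Longrightarrow> v \<in> Zspan S"
  unfolding Zspan_iff by (rule exI[of _ "{v}"], rule exI[of _ "\<lambda>_. 1"]) simp

lemma Zspan_scale:
  assumes "x \<in> Zspan S"
  shows "(\<lambda>p. a * x p) \<in> Zspan S"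
proof -
  obtain F c where "finite F" "F \<subseteq> S" and x: "\<forall>p. x p = (\<Sum>v\<in>F. c v * v p)"
    using assms unfolding Zspan_iff by blast
  then show ?thesis
    unfolding Zspan_iff
    by (intro exI[of _ F] exI[of _ "\<lambda>v. a * c v"]) (simp add: x sum_distrib_left mult.assoc)
qed

lemma Zspan_add:
  assumes "x \<in> Zspan S" "y \<in> Zspan S"
  shows "x + y \<in> Zspan S"
proof -
  obtain F c where F: "finite F" "F \<subseteq> S" and x: "\<forall>p. x p = (\<Sum>v\<in>F. c v * v p)"
    using assms(1) unfolding Zspan_iff by blast
  obtain G d where G: "finite G" "G \<subseteq> S" and y: "\<forall>p. y p = (\<Sum>v\<in>G. d v * v p)"
    using assms(2) unfolding Zspan_iff by blast
  define k where "k v = (if v \<in> F then c v else 0) + (if v \<in> G then d v else 0)" for v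
  have "(x + y) p = (\<Sum>v\<in>F \<union> G. k v * v p)" for p
  proof -
    have "(\<Sum>v\<in>F \<union> G. k v * v p) = (\<Sum>v\<in>F \<union> G. if v \<in> F then c v * v p else 0)
        + (\<Sum>v\<in>F \<union> G. if v \<in> G then d v * v p else 0)"
      unfolding sum.distrib[symmetric] by (rule sum.cong) (simp_all add: k_def distrib_right)
    also have "\<dots> = x p + y p"
      using F(1) G(1) by (simp add: x[rule_format] y[rule_format] sum.inter_restrict[symmetric]
          Int_absorb1 Int_absorb2)
    finally show ?thesis by simp
  qed
  then show ?thesis
    unfolding Zspan_iff using F G by (intro exI[of _ "F \<union> G"] exI[of _ k]) simp
qed

lemma Zspan_diff:
  assumes "x \<in> Zspan S" "y \<in> Zspan S"
  shows "x - y \<in> Zspan S"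
proof -
  have "x + (\<lambda>p. - 1 * y p) \<in> Zspan S" by (intro Zspan_add Zspan_scale assms)
  moreover have "x + (\<lambda>p. - 1 * y p) = x - y" by (simp add: fun_eq_iff)
  ultimately show ?thesis by (simp only:)
qed

lemma Zspan_sum: "(\<And>a. a \<in> A \<Longrightarrow> g a \<in> Zspan S) \<Longrightarrow> (\<Sum>a\<in>A. g a) \<in> Zspan S"
  by (induction A rule: infinite_finite_induct) (auto intro: Zspan_add Zspan_zero)

lemma Zspan_minimal:
  assumes "0 \<in> A" "\<And>x y. x \<in> A \<Longrightarrow> y \<in> A \<Longrightarrow> x + y \<in> A"
    and "\<And>a x. x \<in> A \<Longrightarrow> (\<lambda>p. a * x p) \<in> A" and "S \<subseteq> A"
  shows "Zspan S \<subseteq> A"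
proof
  fix x assume "x \<in> Zspan S"
  then obtain F c where F: "finite F" "F \<subseteq> S" and x: "x = (\<Sum>v\<in>F. (\<lambda>p. c v * v p))"
    unfolding Zspan_def by blast
  from F show "x \<in> A"
    unfolding x by (induction F rule: finite_induct) (use assms in auto)
qed

lemma Zspan_subset_Zspan: "S \<subseteq> Zspan T \<Longrightarrow> Zspan S \<subseteq> Zspan T"
  by (rule Zspan_minimal) (auto intro: Zspan_zero Zspan_add Zspan_scale)

lemma Zspan_coord_dvd:
  assumes "x \<in> Zspan S" "\<And>v. v \<in> S \<Longrightarrow> d dvd v p"
  shows "d dvd x p"
proof -
  have "Zspan S \<subseteq> {x. d dvd x p}"
    by (rule Zspan_minimal) (use assms(2) in auto)
  then show ?thesis using assms(1) by blast
qed

lemma Vn_add: "Vn n (x + y) m = Vn n x m + Vn n y m"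
  unfolding Vn_def by (simp add: split_def sum.distrib distrib_right)

lemma Vn_diff: "Vn n (x - y) m = Vn n x m - Vn n y m"
  unfolding Vn_def by (simp add: split_def sum_subtractf left_diff_distrib)

lemma Vn_scale: "Vn n (\<lambda>p. a * x p) m = a * Vn n x m"
  unfolding Vn_def by (simp add: split_def sum_distrib_left mult.assoc)

lemma zero_in_L: "0 \<in> L n"
  by (simp add: L_def Vn_def)

lemma L_add: "x \<in> L n \<Longrightarrow> y \<in> L n \<Longrightarrow> x + y \<in> L n"
  by (simp add: L_def Vn_add)

lemma L_diff: "x \<in> L n \<Longrightarrow> y \<in> L n \<Longrightarrow> x - y \<in> L n"
  by (simp add: L_def Vn_diff)

lemma L_scale: "x \<in> L n \<Longrightarrow> (\<lambda>p. a * x p) \<in> L n"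
  by (simp add: L_def Vn_scale)

lemma Zspan_subset_L: "S \<subseteq> L n \<Longrightarrow> Zspan S \<subseteq> L n"
  by (rule Zspan_minimal) (auto intro: zero_in_L L_add L_scale)

lemma group_Lgroup: "group (Lgroup n)"
proof (rule groupI)
  fix x assume "x \<in> carrier (Lgroup n)"
  then have "- x \<in> carrier (Lgroup n)" "- x \<otimes>\<^bsub>Lgroup n\<^esub> x = \<one>\<^bsub>Lgroup n\<^esub>"
    using L_diff[OF zero_in_L, of x n] by (simp_all add: Lgroup_def)
  then show "\<exists>y\<in>carrier (Lgroup n). y \<otimes>\<^bsub>Lgroup n\<^esub> x = \<one>\<^bsub>Lgroup n\<^esub>" by blast
qed (simp_all add: Lgroup_def L_add zero_in_L add.assoc)

lemma e_sym: "e a b = e b a"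
  unfolding e_def by (simp add: min.commute max.commute)

lemma e_apply: "e a b (i, j) = (if i = min a b \<and> j = max a b then 1 else 0)"
  unfolding e_def by auto

lemma e_apply_ordered: "a \<le> b \<Longrightarrow> i \<le> j \<Longrightarrow> e a b (i, j) = (if (i, j) = (a, b) then 1 else 0)"
  by (simp add: e_apply)

lemma finite_Idx: "finite (Idx n)"
  by (rule finite_subset[of _ "{1..n} \<times> {1..n}"]) (auto simp: Idx_def)

lemma Vn_e:
  assumes "a \<in> {1..n}" "b \<in> {1..n}"
  shows "Vn n (e a b) m = (if a = m then 1 else 0) + (if b = m then 1 else 0)"
proof -
  let ?w = "\<lambda>(j, k). (if j = m then 1 else 0) + (if k = m then 1 else 0) :: int"
  have "Vn n (e a b) m = (\<Sum>q\<in>Idx n. if q = (min a b, max a b) then ?w q else 0)"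
    unfolding Vn_def by (rule sum.cong) (auto simp: e_def)
  also have "\<dots> = ?w (min a b, max a b)"
  proof -
    have "(min a b, max a b) \<in> Idx n" using assms by (auto simp: Idx_def)
    then show ?thesis by (simp only: sum.delta[OF finite_Idx] if_True)
  qed
  finally show ?thesis by (auto simp: min_def max_def)
qed

lemma e_eq_0_outside_Idx:
  assumes "a \<in> {1..n}" "b \<in> {1..n}" "p \<notin> Idx n"
  shows "e a b p = 0"
  using assms by (auto simp: e_def Idx_def)

lemma bracket_in_L:
  assumes "i \<in> {1..n}" "j \<in> {1..n}" "k \<in> {1..n}" "l \<in> {1..n}"
  shows "bracket i j k l \<in> L n"
proof -
  have "bracket i j k l p = 0" if "p \<notin> Idx n" for p
    using assms e_eq_0_outside_Idx[OF _ _ that] by (simp add: bracket_def)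
  then show ?thesis
    using assms by (simp add: L_def bracket_def Vn_add Vn_diff Vn_e)
qed

lemma bracket_transpose: "bracket k l i j = bracket i j k l"
  unfolding bracket_def by (simp add: e_sym[of k i] e_sym[of l j] e_sym[of k j] e_sym[of l i])

lemma bracket_swap: "bracket j i l k = bracket i j k l"
  unfolding bracket_def by simp

lemma bracket_n_apply: "j < n \<Longrightarrow> bracket a n b n (i, j) = e a b (i, j)"
  by (auto simp: bracket_def e_apply)

lemma two_bracket: "(\<lambda>p. 2 * bracket i n j n p) = bracket i n i n + bracket j n j n - bracket i j i j"
  unfolding bracket_def by (auto simp: fun_eq_iff e_sym[of n i] e_sym[of n j] e_sym[of j i])

lemma Lprime_subset_L: "Lprime n \<subseteq> L n"
  unfolding Lprime_def by (rule Zspan_subset_L) (auto intro: bracket_in_L)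

lemma Zspan_Bprime_subset_Lprime: "Zspan (Bprime n) \<subseteq> Lprime n"
  unfolding Lprime_def
proof (rule Zspan_subset_Zspan, rule subsetI)
  let ?G = "{bracket i j i j | i j. i \<in> {1..n} \<and> j \<in> {1..n}}"
  have G: "bracket i j i j \<in> Zspan ?G" if "i \<in> {1..n}" "j \<in> {1..n}" for i j
    using that by (blast intro: Zspan_superset)
  fix b assume "b \<in> Bprime n"
  then consider (off) i j where "i \<in> {1..n-1}" "j \<in> {1..n-1}" "b = (\<lambda>p. 2 * bracket i n j n p)"
    | (diag) i where "i \<in> {1..n-1}" "b = bracket i n i n"
    unfolding Bprime_def by blast
  then show "b \<in> Zspan ?G"
  proof cases
    case off
    then have "i \<in> {1..n}" "j \<in> {1..n}" "n \<in> {1..n}" by auto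
    then show ?thesis unfolding off(3) two_bracket by (intro Zspan_add Zspan_diff G)
  next
    case diag
    then have "i \<in> {1..n}" "n \<in> {1..n}" by auto
    then show ?thesis unfolding diag(2) by (rule G)
  qed
qed

lemma Lprime_subset_Zspan_Bprime: "Lprime n \<subseteq> Zspan (Bprime n)"
  unfolding Lprime_def
proof (rule Zspan_subset_Zspan, rule subsetI)
  have B: "bracket k n k n \<in> Zspan (Bprime n)" if "k \<in> {1..n}" "k \<noteq> n" for k
    using that by (auto intro!: Zspan_superset simp: Bprime_def)
  fix b assume "b \<in> {bracket i j i j | i j. i \<in> {1..n} \<and> j \<in> {1..n}}"
  then obtain i j where ij: "i \<in> {1..n}" "j \<in> {1..n}" and b: "b = bracket i j i j" by blast
  consider "i = j" | "i \<noteq> j" "i = n" | "i \<noteq> j" "j = n" | "i \<noteq> j" "i \<noteq> n" "j \<noteq> n"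
    by blast
  then show "b \<in> Zspan (Bprime n)"
  proof cases
    case 1
    then show ?thesis by (simp add: b bracket_def Zspan_zero)
  next
    case 2
    then show ?thesis using B[of j] ij by (simp add: b bracket_swap[of n j n j])
  next
    case 3
    then show ?thesis using B[of i] ij by (simp add: b)
  next
    case 4
    then have "(\<lambda>p. 2 * bracket i n j n p) \<in> Zspan (Bprime n)"
      using ij by (intro Zspan_superset) (auto simp: Bprime_def)
    moreover have "b = bracket i n i n + bracket j n j n - (\<lambda>p. 2 * bracket i n j n p)"
      by (simp add: b two_bracket)
    ultimately show ?thesis using B[of i] B[of j] ij 4 by (auto intro!: Zspan_add Zspan_diff)
  qed
qed

lemma Zspan_Bprime_eq_Lprime: "Zspan (Bprime n) = Lprime n"
  using Zspan_Bprime_subset_Lprime Lprime_subset_Zspan_Bprime by blast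

definition Bprime_gen :: "nat \<Rightarrow> nat \<times> nat \<Rightarrow> nat \<times> nat \<Rightarrow> int" where
  "Bprime_gen n q = (\<lambda>p. (if fst q = snd q then 1 else 2) * bracket (fst q) n (snd q) n p)"

lemma Bprime_eq_image_gen: "Bprime n = Bprime_gen n ` Idx (n - 1)"
proof
  show "Bprime n \<subseteq> Bprime_gen n ` Idx (n - 1)"
  proof
    fix b assume "b \<in> Bprime n"
    then consider (off) i j where "i \<in> {1..n-1}" "j \<in> {1..n-1}" "i \<noteq> j"
        "b = (\<lambda>p. 2 * bracket i n j n p)"
      | (diag) i where "i \<in> {1..n-1}" "b = bracket i n i n"
      unfolding Bprime_def by blast
    then show "b \<in> Bprime_gen n ` Idx (n - 1)"
    proof cases
      case off
      then have "b = Bprime_gen n (min i j, max i j)"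
        by (cases "i < j") (auto simp: Bprime_gen_def min_def max_def bracket_transpose[of j n i n])
      moreover have "(min i j, max i j) \<in> Idx (n - 1)" using off by (auto simp: Idx_def)
      ultimately show ?thesis by blast
    next
      case diag
      then show ?thesis by (intro image_eqI[of _ _ "(i, i)"]) (auto simp: Bprime_gen_def Idx_def)
    qed
  qed
  show "Bprime_gen n ` Idx (n - 1) \<subseteq> Bprime n"
    by (force simp: Bprime_gen_def Idx_def Bprime_def)
qed

lemma Bprime_gen_apply_lower:
  assumes "q \<in> Idx (n - 1)" "p \<in> Idx (n - 1)"
  shows "Bprime_gen n q p = (if p = q then if fst q = snd q then 1 else 2 else 0)"
  using assms by (auto simp: Bprime_gen_def Idx_def bracket_n_apply e_apply_ordered)

lemma Bprime_minimal: "b \<in> Bprime n \<Longrightarrow> Zspan (Bprime n - {b}) \<noteq> Lprime n"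
proof
  assume b: "b \<in> Bprime n" and eq: "Zspan (Bprime n - {b}) = Lprime n"
  obtain q where q: "q \<in> Idx (n - 1)" "b = Bprime_gen n q"
    using b by (auto simp: Bprime_eq_image_gen)
  have "0 dvd b q"
  proof (rule Zspan_coord_dvd)
    show "b \<in> Zspan (Bprime n - {b})"
      using b eq Zspan_Bprime_eq_Lprime Zspan_superset by blast
    fix v assume "v \<in> Bprime n - {b}"
    then obtain q' where "q' \<in> Idx (n - 1)" "v = Bprime_gen n q'" "q' \<noteq> q"
      using q by (auto simp: Bprime_eq_image_gen)
    then show "0 dvd v q" using q by (simp add: Bprime_gen_apply_lower)
  qed
  then show False using q by (simp add: Bprime_gen_apply_lower split: if_splits)
qed

lemma Vn_if_lower_zero:
  assumes "\<And>p. p \<in> Idx (n - 1) \<Longrightarrow> x p = 0"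
  shows "Vn n x m = (\<Sum>s=1..n. x (s, n) * ((if s = m then 1 else 0) + (if n = m then 1 else 0)))"
proof -
  let ?g = "\<lambda>(j, k). x (j, k) * ((if j = m then 1 else 0) + (if k = m then 1 else 0))"
  have "Vn n x m = (\<Sum>q\<in>(\<lambda>s. (s, n)) ` {1..n}. ?g q)"
    unfolding Vn_def
  proof (rule sum.mono_neutral_right[OF finite_Idx])
    show "(\<lambda>s. (s, n)) ` {1..n} \<subseteq> Idx n" by (auto simp: Idx_def)
    show "\<forall>q\<in>Idx n - (\<lambda>s. (s, n)) ` {1..n}. ?g q = 0"
      using assms by (force simp: Idx_def)
  qed
  also have "\<dots> = (\<Sum>s=1..n. ?g (s, n))"
    by (simp add: sum.reindex inj_on_def)
  finally show ?thesis by simp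
qed

lemma L_eq_0I:
  assumes x: "x \<in> L n" and lower: "\<And>p. p \<in> Idx (n - 1) \<Longrightarrow> x p = 0"
  shows "x = 0"
proof -
  have V: "(\<Sum>s=1..n. x (s, n) * ((if s = m then 1 else 0) + (if n = m then 1 else 0))) = 0"
    if "m \<in> {1..n}" for m
    using x that Vn_if_lower_zero[OF lower] by (simp add: L_def)
  have last_col: "x (a, n) = 0" if "a \<in> {1..n}" "a \<noteq> n" for a
  proof -
    have "(\<Sum>s=1..n. x (s, n) * ((if s = a then 1 else 0) + (if n = a then 1 else 0)))
        = (\<Sum>s=1..n. if s = a then x (a, n) else 0)"
      by (rule sum.cong) (use that in auto)
    then show ?thesis using V[of a] that by simp
  qed
  have corner: "x (n, n) = 0" if "1 \<le> n"
  proof -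
    have "(\<Sum>s=1..n. x (s, n) * ((if s = n then 1 else 0) + 1)) = (\<Sum>s=1..n. if s = n then 2 * x (n, n) else 0)"
      by (rule sum.cong) (auto simp: last_col)
    then show ?thesis using V[of n] that by simp
  qed
  show ?thesis
  proof
    fix p
    show "x p = 0 p"
    proof (cases "p \<in> Idx n")
      case False
      then show ?thesis using x by (cases p) (simp add: L_def)
    next
      case True
      then obtain i j where "p = (i, j)" "1 \<le> i" "i \<le> j" "j \<le> n" by (auto simp: Idx_def)
      then show ?thesis using lower[of p] last_col[of i] corner
        by (cases "j = n") (auto simp: Idx_def)
    qed
  qed
qed

definition Offdiag :: "nat \<Rightarrow> (nat \<times> nat) set" where
  "Offdiag m = {(i, j). 1 \<le> i \<and> i < j \<and> j \<le> m}"

lemma finite_Offdiag: "finite (Offdiag m)"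
  by (rule finite_subset[OF _ finite_Idx[of m]]) (auto simp: Offdiag_def Idx_def)

lemma card_Offdiag: "card (Offdiag m) = m choose 2"
proof -
  have "bij_betw (\<lambda>(i, j). {i, j}) (Offdiag m) {A. A \<subseteq> {1..m} \<and> card A = 2}"
  proof (rule bij_betw_imageI)
    show "inj_on (\<lambda>(i, j). {i, j}) (Offdiag m)"
      by (auto simp: inj_on_def Offdiag_def doubleton_eq_iff)
    show "(\<lambda>(i, j). {i, j}) ` Offdiag m = {A. A \<subseteq> {1..m} \<and> card A = 2}"
    proof (intro equalityI subsetI)
      fix A assume "A \<in> (\<lambda>(i, j). {i, j}) ` Offdiag m"
      then show "A \<in> {A. A \<subseteq> {1..m} \<and> card A = 2}" by (auto simp: Offdiag_def)
    next
      fix A assume A: "A \<in> {A. A \<subseteq> {1..m} \<and> card A = 2}"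
      then obtain a b where ab: "A = {a, b}" "a \<noteq> b" by (auto simp: card_2_iff)
      then have "(min a b, max a b) \<in> Offdiag m" using A by (auto simp: Offdiag_def)
      moreover have "A = (\<lambda>(i, j). {i, j}) (min a b, max a b)" using ab by (auto simp: min_def max_def)
      ultimately show "A \<in> (\<lambda>(i, j). {i, j}) ` Offdiag m" by blast
    qed
  qed
  then show ?thesis by (simp add: bij_betw_same_card n_subsets)
qed

lemma Lprime_iff_even_Offdiag:
  "x \<in> Lprime n \<longleftrightarrow> x \<in> L n \<and> (\<forall>q\<in>Offdiag (n - 1). even (x q))"
proof
  assume x: "x \<in> Lprime n"
  have "2 dvd x q" if "q \<in> Offdiag (n - 1)" for q
  proof (rule Zspan_coord_dvd[OF x[unfolded Lprime_def]])
    fix v assume "v \<in> {bracket i j i j | i j. i \<in> {1..n} \<and> j \<in> {1..n}}"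
    then obtain i j where "v = bracket i j i j" by blast
    then show "2 dvd v q" using that e_sym[of i j] by (auto simp: Offdiag_def bracket_def e_apply)
  qed
  then show "x \<in> L n \<and> (\<forall>q\<in>Offdiag (n - 1). even (x q))"
    using x Lprime_subset_L by blast
next
  assume "x \<in> L n \<and> (\<forall>q\<in>Offdiag (n - 1). even (x q))"
  then have x: "x \<in> L n" and even: "\<And>q. q \<in> Offdiag (n - 1) \<Longrightarrow> even (x q)" by auto
  define k where "k q = (if fst q = snd q then x q else x q div 2)" for q
  define u where "u = (\<Sum>q\<in>Idx (n - 1). (\<lambda>p. k q * Bprime_gen n q p))"
  have u: "u \<in> Lprime n"
    unfolding u_def Zspan_Bprime_eq_Lprime[symmetric] Bprime_eq_image_gen
    by (intro Zspan_sum Zspan_scale Zspan_superset imageI)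
  have "x p = u p" if p: "p \<in> Idx (n - 1)" for p
  proof -
    have "u p = (\<Sum>q\<in>Idx (n - 1). if q = p then k p * (if fst p = snd p then 1 else 2) else 0)"
      unfolding u_def sum_fun_apply
    proof (rule sum.cong)
      fix q assume "q \<in> Idx (n - 1)"
      then show "k q * Bprime_gen n q p = (if q = p then k p * (if fst p = snd p then 1 else 2) else 0)"
        using Bprime_gen_apply_lower[OF _ p] by auto
    qed simp
    also have "\<dots> = k p * (if fst p = snd p then 1 else 2)"
      using p by (simp add: sum.delta[OF finite_Idx])
    also have "\<dots> = x p"
      using p even[of p] by (auto simp: k_def Idx_def Offdiag_def)
    finally show ?thesis by simp
  qed
  moreover have "x - u \<in> L n" using L_diff[OF x] u Lprime_subset_L by blast
  ultimately have "x - u = 0" by (intro L_eq_0I) auto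
  then show "x \<in> Lprime n" using u by simp
qed

lemma L_realizes_Offdiag: "\<exists>x\<in>L n. \<forall>q\<in>Offdiag (n - 1). x q = t q"
proof
  define x where "x = (\<Sum>q\<in>Offdiag (n - 1). (\<lambda>p. t q * bracket (fst q) n (snd q) n p))"
  have "x \<in> Zspan (L n)"
    unfolding x_def
    by (intro Zspan_sum Zspan_scale Zspan_superset bracket_in_L) (auto simp: Offdiag_def)
  then show "x \<in> L n" using Zspan_subset_L by blast
  show "\<forall>q\<in>Offdiag (n - 1). x q = t q"
  proof
    fix p assume p: "p \<in> Offdiag (n - 1)"
    have "x p = (\<Sum>q\<in>Offdiag (n - 1). if q = p then t p else 0)"
      unfolding x_def sum_fun_apply
      by (rule sum.cong) (use p in \<open>auto simp: Offdiag_def bracket_n_apply e_apply_ordered\<close>)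
    then show "x p = t p" using p by (simp add: finite_Offdiag)
  qed
qed

lemma bij_betw_ball_iff: "bij_betw f A B \<Longrightarrow> (\<forall>a\<in>A. P (f a)) \<longleftrightarrow> (\<forall>b\<in>B. P b)"
  by (auto simp: bij_betw_def)

lemma Offdiag_parities_onto_L:
  assumes f: "bij_betw f I (Offdiag (n - 1))"
  shows "(\<lambda>x. \<lambda>k\<in>I. x (f k) mod 2) ` L n = (\<Pi>\<^sub>E k\<in>I. {0..<2})"
proof
  show "(\<lambda>x. \<lambda>k\<in>I. x (f k) mod 2) ` L n \<subseteq> (\<Pi>\<^sub>E k\<in>I. {0..<2})" by auto
  show "(\<Pi>\<^sub>E k\<in>I. {0..<2}) \<subseteq> (\<lambda>x. \<lambda>k\<in>I. x (f k) mod 2) ` L n"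
  proof
    fix t assume t: "t \<in> (\<Pi>\<^sub>E k\<in>I. {0..<2::int})"
    obtain x where x: "x \<in> L n" "\<forall>q\<in>Offdiag (n - 1). x q = t (inv_into I f q)"
      using L_realizes_Offdiag[of n "\<lambda>q. t (inv_into I f q)"] by blast
    have "(\<lambda>k\<in>I. x (f k) mod 2) k = t k" for k
    proof (cases "k \<in> I")
      case True
      then have "f k \<in> Offdiag (n - 1)" "inv_into I f (f k) = k" "t k \<in> {0..<2}"
        using f t by (auto simp: bij_betw_def)
      then show ?thesis using x(2) True by simp
    next
      case False
      then show ?thesis using PiE_arb[OF t] by simp
    qed
    then have "t = (\<lambda>k\<in>I. x (f k) mod 2)" by (simp add: fun_eq_iff)
    then show "t \<in> (\<lambda>x. \<lambda>k\<in>I. x (f k) mod 2) ` L n" using x(1) by blast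
  qed
qed

lemma Lgroup_Mod_Lprime_iso:
  "(Lgroup n Mod Lprime n) \<cong> product_group {..<((n - 1) choose 2)} (\<lambda>_. integer_mod_group 2)"
proof -
  let ?I = "{..<((n - 1) choose 2)}"
  let ?H = "product_group ?I (\<lambda>_. integer_mod_group 2)"
  obtain f where f: "bij_betw f ?I (Offdiag (n - 1))"
    using ex_bij_betw_nat_finite[OF finite_Offdiag] by (auto simp: card_Offdiag atLeast0LessThan)
  define h where "h x = (\<lambda>k\<in>?I. x (f k) mod 2)" for x :: "nat \<times> nat \<Rightarrow> int"
  have "h \<in> hom (Lgroup n) ?H"
    by (rule homI) (auto simp: h_def Lgroup_def carrier_integer_mod_group mod_add_eq)
  then have hom: "group_hom (Lgroup n) ?H h"
    by (simp add: group_hom_def group_hom_axioms_def group_Lgroup)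
  have "kernel (Lgroup n) ?H h = {x \<in> L n. \<forall>k\<in>?I. even (x (f k))}"
    by (auto simp: kernel_def Lgroup_def h_def fun_eq_iff restrict_def)
  also have "\<dots> = Lprime n"
  proof -
    have "(\<forall>k\<in>?I. even (x (f k))) \<longleftrightarrow> (\<forall>q\<in>Offdiag (n - 1). even (x q))"
      for x :: "nat \<times> nat \<Rightarrow> int"
      by (rule bij_betw_ball_iff[OF f])
    then show ?thesis by (auto simp: Lprime_iff_even_Offdiag)
  qed
  finally have ker: "kernel (Lgroup n) ?H h = Lprime n" .
  have "h ` carrier (Lgroup n) = carrier ?H"
    using Offdiag_parities_onto_L[OF f]
    by (simp add: h_def[abs_def] Lgroup_def carrier_integer_mod_group)
  then show ?thesis using group_hom.FactGroup_iso[OF hom] ker by simp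
qed

theorem proposition2p3:
  fixes n :: nat
  assumes "n \<ge> 2"
  shows "Zspan (Bprime n) = Lprime n
         \<and> (\<forall>b\<in>Bprime n. Zspan (Bprime n - {b}) \<noteq> Lprime n)
         \<and> (Lgroup n Mod Lprime n) \<cong> product_group {..<((n - 1) choose 2)} (\<lambda>_. integer_mod_group 2)"
  \<comment> \<open>all three parts hold for every \<open>n\<close>\<close>
  using Zspan_Bprime_eq_Lprime Bprime_minimal Lgroup_Mod_Lprime_iso by blast

end
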